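(* Assume the setting and hypotheses of the previous statement (the orthogonality conditions on $\hat f_v,\hat g_w$ for $x\ge1$), together with the cone setting of the context, and assume moreover that $\Phi_{v,w}(e^{v,w}_0)\in C_{v,w}$ and $\hat\Phi^*_{v,w}(e^{v,w}_0)\in C^*_{v,w}$ for all $(v,w)\in E$, with $\langle \Phi_{v,w}(e^{v,w}_0),u^*_{v,w}\rangle>0$ and $\langle u_{v,w},\hat\Phi^*_{v,w}(e^{v,w}_0)\rangle>0$. Write $\Phi_{v,w}(e^{v,w}_0)=c_{v,w}m_{v\to w}$ and $\hat\Phi^*_{v,w}(e^{v,w}_0)=\hat c_{v,w}m_{w\to v}$ with $c_{v,w},\hat c_{v,w}>0$, $m_{v\to w}\in C_{v,w}$, $m_{w\to v}\in C^*_{v,w}$, $\langle m_{v\to w},u^*_{v,w}\rangle=1$, $\langle u_{v,w},m_{w\to v}\rangle=1$. Then: (i) $c_{v,w}\hat c_{v,w}\langle m_{v\to w},m_{w\to v}\rangle_{\mathcal{V}_{v,w}}=1$ for every edge; (ii) for every $(v,w)\in E$, $$\Big\langle f_v,\bigotimes_{w'\in\partial v\setminus\{w\}}m_{w'\to v}\Big\rangle_{\mathcal{V}_{\partial v\setminus w}}=\frac{\alpha_v c_{v,w}}{\prod_{w'\in\partial v\setminus\{w\}}\hat c_{v,w'}}\,m_{v\to w},\qquad \Big\langle\bigotimes_{v'\in\partial w\setminus\{v\}}m_{v'\to w},g_w\Big\rangle_{\mathcal{V}_{\partial w\setminus v}}=\frac{\hat\alpha_w\hat c_{v,w}}{\prod_{v'\in\partial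 w\setminus\{v\}}c_{v',w}}\,m_{w\to v},$$ so that (whenever $\alpha_v,\hat\alpha_w>0$) the messages $(m_{v\to w},m_{w\to v})_{(v,w)\in E}$ form a fixed point of belief propagation; (iii) the term of the all-zero assignment in the expansion of $\langle\bigotimes_v\hat f_v,\bigotimes_w\hat g_w\rangle_{\mathcal V}$ with respect to the bases $(e^{v,w}_x)$, namely $\prod_{v\in V}\alpha_v\prod_{w\in W}\hat\alpha_w$, equals $$\prod_{v\in V}\Big\langle f_v,\bigotimes_{w\in\partial v}m_{w\to v}\Big\rangle_{\mathcal{V}_{\partial v}}\prod_{w\in W}\Big\langle\bigotimes_{v\in\partial w}m_{v\to w},g_w\Big\rangle_{\mathcal{V}_{\partial w}}\prod_{(v,w)\in E}\frac{1}{\langle m_{v\to w},m_{w\to v}\rangle_{\mathcal{V}_{v,w}}}.$$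
   Context: Bipartite graph $(V,W,E\subseteq V\times W)$, $\partial v=\{w:(v,w)\in E\}$, $\partial w=\{v:(v,w)\in E\}$. For each edge, $\mathcal{V}_{v,w}$ is a real inner product space of dimension $q_{v,w}$ with orthonormal basis $(e^{v,w}_x)_{x=0,\dots,q_{v,w}-1}$; tensor products carry the product inner product. $\mathcal{V}_{\partial v}=\bigotimes_{w\in\partial v}\mathcal{V}_{v,w}$, $\mathcal{V}_{\partial w}=\bigotimes_{v\in\partial w}\mathcal{V}_{v,w}$, $\mathcal{V}_{\partial v\setminus w}$, $\mathcal{V}_{\partial w\setminus v}$ the tensor products over the neighbours other than $w$ (resp. $v$). $f_v\in\mathcal{V}_{\partial v}$, $g_w\in\mathcal{V}_{\partial w}$. $\Phi_{v,w}$ invertible on $\mathcal{V}_{v,w}$, $\hat\Phi_{v,w}=\Phi_{v,w}^{-1}$, $A^*$ is the adjoint with respect to the inner product; $\hat f_v=(\bigotimes_{w\in\partial v}\hat\Phi_{v,w})(f_v)$, $\hat g_w=(\bigotimes_{v\in\partial w}\Phi^*_{v,w})(g_w)$; $\alpha_v=\langle\hat f_v,\bigotimes_{w\in\partial v}e^{v,w}_0\rangle$, $\hat\alpha_w=\langle\bigotimes_{v\in\partial w}e^{v,w}_0,\hat g_w\rangle$. The hypotheses of the previous statement are: $\langle\hat f_v,e^{v,w}_x\otimes\bigotimes_{w'\in\partial v\setminus\{w\}}e^{v,w'}_0\rangle=0$ and $\langle e^{v,w}_x\otimes\bigotimes_{v'\in\partial w\setminus\{v\}}e^{v',w}_0,\hat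 g_w\rangle=0$ for all edges and $x\in\{1,\dots,q_{v,w}-1\}$. Partial inner product: for $f\in\mathcal V\otimes\mathcal W$, $g\in\mathcal V$, $\langle f,g\rangle_{\mathcal V}\in\mathcal W$ is determined by $\langle\langle f,g\rangle_{\mathcal V},h\rangle=\langle f,g\otimes h\rangle$ for all $h\in\mathcal W$. Cones: $C_{v,w}\subseteq\mathcal{V}_{v,w}$ closed convex cones, $C^*$ the dual cone $\{f:\langle f,g\rangle\ge0\ \forall g\in C\}$; $u_{v,w}$ and $u^*_{v,w}$ are fixed vectors in the interiors of $C_{v,w}$ and $C^*_{v,w}$. A belief propagation fixed point is a family $m_{v\to w}\in C_{v,w}$, $m_{w\to v}\in C^*_{v,w}$ with $\langle m_{v\to w},u^*_{v,w}\rangle=1=\langle u_{v,w},m_{w\to v}\rangle$ such that $m_{v\to w}$ is a strictly positive multiple of $\langle f_v,\bigotimes_{w'\in\partial v\setminus\{w\}}m_{w'\to v}\rangle$ and $m_{w\to v}$ is a strictly positive multiple of $\langle\bigotimes_{v'\in\partial w\setminus\{v\}}m_{v'\to w},g_w\rangle$. *)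

theory Defs
  imports "HOL-Analysis.Analysis"
begin

text \<open>Each edge space V_e (e = (v,w)) of dimension q e is represented by its
coordinate vectors w.r.t. the orthonormal basis (e_x)_{x<q e}: functions nat => real vanishing
for indices >= q e. A tensor over a finite set S of edges (an element of the tensor product of
the V_e, e in S) is represented by its coordinates w.r.t. the product basis, i.e. a function on
assignments x with x e < q e for e in S (and x e = 0 outside S).\<close>

type_synonym 'e tensor = "('e \<Rightarrow> nat) \<Rightarrow> real"

definition espace :: "nat \<Rightarrow> (nat \<Rightarrow> real) set" where
  "espace n = {a. \<forall>i\<ge>n. a i = 0}"

definition evec :: "nat \<Rightarrow> nat \<Rightarrow> real" where
  "evec k = (\<lambda>i. if i = k then 1 else 0)"

definition einner :: "nat \<Rightarrow> (nat \<Rightarrow> real) \<Rightarrow> (nat \<Rightarrow> real) \<Rightarrow> real" where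
  "einner n a b = (\<Sum>i<n. a i * b i)"

text \<open>Matrix (w.r.t. the orthonormal basis) applied to a vector; adjoint = transpose.\<close>
definition mapp :: "nat \<Rightarrow> (nat \<Rightarrow> nat \<Rightarrow> real) \<Rightarrow> (nat \<Rightarrow> real) \<Rightarrow> nat \<Rightarrow> real" where
  "mapp n A a = (\<lambda>i. if i < n then (\<Sum>j<n. A i j * a j) else 0)"

definition adj :: "(nat \<Rightarrow> nat \<Rightarrow> real) \<Rightarrow> nat \<Rightarrow> nat \<Rightarrow> real" where
  "adj A = (\<lambda>i j. A j i)"

definition is_inverse :: "nat \<Rightarrow> (nat \<Rightarrow> nat \<Rightarrow> real) \<Rightarrow> (nat \<Rightarrow> nat \<Rightarrow> real) \<Rightarrow> bool" where
  "is_inverse n A B \<longleftrightarrow>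
     (\<forall>i<n. \<forall>j<n. (\<Sum>k<n. A i k * B k j) = (if i = j then 1 else 0)) \<and>
     (\<forall>i<n. \<forall>j<n. (\<Sum>k<n. B i k * A k j) = (if i = j then 1 else 0))"

definition asg :: "('e \<Rightarrow> nat) \<Rightarrow> 'e set \<Rightarrow> ('e \<Rightarrow> nat) set" where
  "asg q S = {x. (\<forall>e\<in>S. x e < q e) \<and> (\<forall>e. e \<notin> S \<longrightarrow> x e = 0)}"

definition tinner :: "('e \<Rightarrow> nat) \<Rightarrow> 'e set \<Rightarrow> 'e tensor \<Rightarrow> 'e tensor \<Rightarrow> real" where
  "tinner q S T U = (\<Sum>x\<in>asg q S. T x * U x)"

definition tprod :: "'e set \<Rightarrow> ('e \<Rightarrow> nat \<Rightarrow> real) \<Rightarrow> 'e tensor" where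
  "tprod S m = (\<lambda>x. \<Prod>e\<in>S. m e (x e))"

text \<open>Partial inner products: for T over S and U over S' (S' a subset of S), the tensor
over S - S'. pinner is <T,U>_{S'}, lpinner is <U,T>_{S'} (U in the left slot).\<close>
definition pinner :: "('e \<Rightarrow> nat) \<Rightarrow> 'e set \<Rightarrow> 'e tensor \<Rightarrow> 'e tensor \<Rightarrow> 'e tensor" where
  "pinner q S' T U = (\<lambda>y. \<Sum>x\<in>asg q S'. T (\<lambda>e. if e \<in> S' then x e else y e) * U x)"

definition lpinner :: "('e \<Rightarrow> nat) \<Rightarrow> 'e set \<Rightarrow> 'e tensor \<Rightarrow> 'e tensor \<Rightarrow> 'e tensor" where
  "lpinner q S' U T = (\<lambda>y. \<Sum>x\<in>asg q S'. U x * T (\<lambda>e. if e \<in> S' then x e else y e))"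

definition tmap :: "('e \<Rightarrow> nat) \<Rightarrow> 'e set \<Rightarrow> ('e \<Rightarrow> nat \<Rightarrow> nat \<Rightarrow> real) \<Rightarrow> 'e tensor \<Rightarrow> 'e tensor" where
  "tmap q S A T = (\<lambda>x. \<Sum>y\<in>asg q S. (\<Prod>e\<in>S. A e (x e) (y e)) * T y)"

text \<open>Neighbourhoods as edge sets: \<partial>v corresponds to {(v,w) | w}, \<partial>w to {(v,w) | v}.\<close>
definition Ev :: "('v \<times> 'w) set \<Rightarrow> 'v \<Rightarrow> ('v \<times> 'w) set" where
  "Ev E v = {e\<in>E. fst e = v}"

definition Ew :: "('v \<times> 'w) set \<Rightarrow> 'w \<Rightarrow> ('v \<times> 'w) set" where
  "Ew E w = {e\<in>E. snd e = w}"

definition closed_convex_cone :: "nat \<Rightarrow> (nat \<Rightarrow> real) set \<Rightarrow> bool" where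
  "closed_convex_cone n C \<longleftrightarrow> C \<subseteq> espace n \<and> C \<noteq> {} \<and> closed C \<and>
     (\<forall>a\<in>C. \<forall>b\<in>C. \<forall>t::real. 0 \<le> t \<and> t \<le> 1 \<longrightarrow> (\<lambda>i. t * a i + (1 - t) * b i) \<in> C) \<and>
     (\<forall>a\<in>C. \<forall>c::real. 0 \<le> c \<longrightarrow> (\<lambda>i. c * a i) \<in> C)"

definition dual_cone :: "nat \<Rightarrow> (nat \<Rightarrow> real) set \<Rightarrow> (nat \<Rightarrow> real) set" where
  "dual_cone n C = {f \<in> espace n. \<forall>g\<in>C. einner n f g \<ge> 0}"

definition in_einterior :: "nat \<Rightarrow> (nat \<Rightarrow> real) set \<Rightarrow> (nat \<Rightarrow> real) \<Rightarrow> bool" where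
  "in_einterior n C u \<longleftrightarrow> (\<exists>T. openin (top_of_set (espace n)) T \<and> u \<in> T \<and> T \<subseteq> C)"

definition fhat where
  "fhat q E Phih f v = tmap q (Ev E v) Phih (f v)"

definition ghat where
  "ghat q E Phi g w = tmap q (Ew E w) (\<lambda>e. adj (Phi e)) (g w)"

definition alpha where
  "alpha q E Phih f v = tinner q (Ev E v) (fhat q E Phih f v) (tprod (Ev E v) (\<lambda>_. evec 0))"

definition alphah where
  "alphah q E Phi g w = tinner q (Ew E w) (tprod (Ew E w) (\<lambda>_. evec 0)) (ghat q E Phi g w)"

definition bp_fixed_point where
  "bp_fixed_point q E C u us f g mvw mwv \<longleftrightarrow>
    (\<forall>e\<in>E. mvw e \<in> C e \<and> mwv e \<in> dual_cone (q e) (C e) \<and>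
       einner (q e) (mvw e) (us e) = 1 \<and> einner (q e) (u e) (mwv e) = 1) \<and>
    (\<forall>v w. (v, w) \<in> E \<longrightarrow> (\<exists>k>0. \<forall>y\<in>asg q {(v, w)}.
        mvw (v, w) (y (v, w)) =
          k * pinner q (Ev E v - {(v, w)}) (f v) (tprod (Ev E v - {(v, w)}) mwv) y)) \<and>
    (\<forall>v w. (v, w) \<in> E \<longrightarrow> (\<exists>k>0. \<forall>y\<in>asg q {(v, w)}.
        mwv (v, w) (y (v, w)) =
          k * lpinner q (Ew E w - {(v, w)}) (tprod (Ew E w - {(v, w)}) mvw) (g w) y))"

end

theory Submission
  imports Defs
begin

text \<open>Fix an edge (v,w) and let P(k) be the contraction of f_v with the messages m_{w'->v} on the
  other edges of v, its index on (v,w) set to k. Row 0 of \<Phi>^-1 on every other edge is ch * m_{w'->v},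
  so the coefficient of fhat_v at the assignment "k on (v,w), 0 elsewhere" is (\<Prod> ch) * (\<Phi>^-1 P)(k).
  Orthogonality makes it vanish for k \<ge> 1; hence \<Phi>^-1 P is a multiple of e_0 and P is the same
  multiple of column 0 of \<Phi>, which is c * m_{v->w}. The multiple is read off at k = 0, where the
  coefficient is alpha_v. The same computation at the all-zero assignment gives
  alpha_v = (\<Prod> ch) * <f_v, \<otimes> m_{w->v}>, and c * ch * <m_{v->w}, m_{w->v}> = (\<Phi>^-1 \<Phi>)_00 = 1
  turns the products of these constants into the edge factors of (iii). The factor side is
  identical with the adjoint matrices.\<close>

lemma asg_insert:
  assumes "a \<notin> S"
  shows "asg q (insert a S) = (\<lambda>(k, x). x(a := k)) ` ({..<q a} \<times> asg q S)"
proof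
  show "(\<lambda>(k, x). x(a := k)) ` ({..<q a} \<times> asg q S) \<subseteq> asg q (insert a S)"
    using assms by (auto simp: asg_def)
next
  show "asg q (insert a S) \<subseteq> (\<lambda>(k, x). x(a := k)) ` ({..<q a} \<times> asg q S)"
  proof
    fix z assume z: "z \<in> asg q (insert a S)"
    have "(z a, z(a := 0)) \<in> {..<q a} \<times> asg q S"
      using z by (auto simp: asg_def)
    moreover have "z = (\<lambda>(k, x). x(a := k)) (z a, z(a := 0))" by simp
    ultimately show "z \<in> (\<lambda>(k, x). x(a := k)) ` ({..<q a} \<times> asg q S)" by blast
  qed
qed

lemma inj_on_asg_insert:
  assumes "a \<notin> S"
  shows "inj_on (\<lambda>(k, x). x(a := k)) ({..<q a} \<times> asg q S)"
proof (rule inj_onI, clarify)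
  fix k x k' x'
  assume x: "x \<in> asg q S" and x': "x' \<in> asg q S" and eq: "x(a := k) = x'(a := k')"
  have "x e = x' e" for e
    using fun_cong[OF eq, of e] x x' assms by (cases "e = a") (auto simp: asg_def)
  then show "k = k' \<and> x = x'" using fun_cong[OF eq, of a] by auto
qed

lemma finite_asg: "finite S \<Longrightarrow> finite (asg q S)"
proof (induction S rule: finite_induct)
  case empty
  have "asg q {} = {\<lambda>_. 0}" by (auto simp: asg_def)
  then show ?case by simp
next
  case (insert a S)
  then show ?case by (simp add: asg_insert)
qed

lemma sum_asg_insert:
  assumes "a \<notin> S"
  shows "sum F (asg q (insert a S)) = (\<Sum>k<q a. \<Sum>x\<in>asg q S. F (x(a := k)))"
  unfolding asg_insert[OF assms] sum.reindex[OF inj_on_asg_insert[OF assms]]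
  by (simp add: sum.cartesian_product split_def)

lemma asg_singleton_eq: "y \<in> asg q {a} \<Longrightarrow> y = (\<lambda>e. if e = a then y a else 0)"
  by (auto simp: asg_def)

lemma tinner_commute: "tinner q S T U = tinner q S U T"
  by (simp add: tinner_def mult.commute)

lemma lpinner_eq_pinner: "lpinner q S U T = pinner q S T U"
  by (simp add: lpinner_def pinner_def mult.commute)

lemma tinner_tprod_evec:
  assumes "finite S" "x0 \<in> asg q S"
  shows "tinner q S T (tprod S (\<lambda>e. evec (x0 e))) = T x0"
proof -
  have "tprod S (\<lambda>e. evec (x0 e)) x = (if x = x0 then 1 else 0)" if "x \<in> asg q S" for x
  proof (cases "x = x0")
    case False
    then obtain e where "x e \<noteq> x0 e" by auto
    moreover have "e \<in> S"
      using \<open>x e \<noteq> x0 e\<close> that assms(2) unfolding asg_def by (metis (mono_tags, lifting) mem_Collect_eq)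
    ultimately show ?thesis
      using assms(1) by (auto simp: tprod_def evec_def intro!: prod_zero)
  qed (simp add: tprod_def evec_def)
  then have "tinner q S T (tprod S (\<lambda>e. evec (x0 e))) = (\<Sum>x\<in>asg q S. if x = x0 then T x else 0)"
    unfolding tinner_def by (intro sum.cong) auto
  then show ?thesis
    using assms by (simp add: finite_asg)
qed

lemma tmap_at_zero:
  assumes "finite S" "\<forall>e\<in>S. \<forall>i<q e. A e 0 i = d e * m e i"
  shows "tmap q S A F (\<lambda>_. 0) = (\<Prod>e\<in>S. d e) * tinner q S F (tprod S m)"
proof -
  have "(\<Prod>e\<in>S. A e 0 (y e)) * F y = (\<Prod>e\<in>S. d e) * (F y * tprod S m y)"
    if "y \<in> asg q S" for y
    using that assms(2) by (simp add: tprod_def asg_def prod.distrib[symmetric] mult_ac cong: prod.cong)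
  then show ?thesis
    unfolding tmap_def tinner_def sum_distrib_left by (rule sum.cong[OF refl])
qed

lemma pinner_at_axis:
  assumes "a \<notin> S"
  shows "pinner q S F U (\<lambda>e. if e = a then k else 0) = tinner q S (\<lambda>z. F (z(a := k))) U"
  unfolding pinner_def tinner_def
proof (rule sum.cong[OF refl])
  fix z assume "z \<in> asg q S"
  then have "(\<lambda>e. if e \<in> S then z e else if e = a then k else 0) = z(a := k)"
    using assms by (auto simp: asg_def)
  then show "F (\<lambda>e. if e \<in> S then z e else if e = a then k else 0) * U z = F (z(a := k)) * U z"
    by simp
qed

lemma tmap_at_axis:
  assumes "finite S" "a \<notin> S" "\<forall>e\<in>S. \<forall>i<q e. A e 0 i = d e * m e i"
  shows "tmap q (insert a S) A F (\<lambda>e. if e = a then j else 0) =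
    (\<Prod>e\<in>S. d e) * (\<Sum>k<q a. A a j k * pinner q S F (tprod S m) (\<lambda>e. if e = a then k else 0))"
proof -
  have "(\<Prod>e\<in>insert a S. A e (if e = a then j else 0) ((z(a := k)) e)) =
      A a j k * (\<Prod>e\<in>S. A e 0 (z e))" for z k
    using assms(1,2) by (auto intro: prod.cong)
  then have "tmap q (insert a S) A F (\<lambda>e. if e = a then j else 0) =
      (\<Sum>k<q a. A a j k * tmap q S A (\<lambda>z. F (z(a := k))) (\<lambda>_. 0))"
    by (simp add: tmap_def sum_asg_insert[OF assms(2)] sum_distrib_left mult.assoc)
  also have "\<dots> = (\<Sum>k<q a. A a j k * ((\<Prod>e\<in>S. d e) * pinner q S F (tprod S m) (\<lambda>e. if e = a then k else 0)))"
    by (simp add: tmap_at_zero[of S q A d m, OF assms(1,3)] pinner_at_axis[OF assms(2)])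
  finally show ?thesis
    by (simp add: sum_distrib_left mult_ac)
qed

lemma left_inverse_solve:
  fixes M N :: "nat \<Rightarrow> nat \<Rightarrow> real"
  assumes "\<forall>i<n. \<forall>k<n. (\<Sum>j<n. M i j * N j k) = (if i = k then 1 else 0)"
    and "\<forall>j<n. (\<Sum>k<n. N j k * x k) = (if j = 0 then a else 0)"
    and "0 < n" "i < n"
  shows "x i = M i 0 * a"
proof -
  have "x i = (\<Sum>k<n. if i = k then x k else 0)"
    using assms(4) by simp
  also have "\<dots> = (\<Sum>k<n. (if i = k then 1 else 0) * x k)"
    by (intro sum.cong) auto
  also have "\<dots> = (\<Sum>k<n. (\<Sum>j<n. M i j * N j k) * x k)"
    using assms(1,4) by (intro sum.cong) auto
  also have "\<dots> = (\<Sum>k<n. \<Sum>j<n. M i j * N j k * x k)"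
    by (simp add: sum_distrib_right)
  also have "\<dots> = (\<Sum>j<n. M i j * (\<Sum>k<n. N j k * x k))"
    by (subst sum.swap) (simp add: sum_distrib_left mult.assoc)
  also have "\<dots> = (\<Sum>j<n. if j = 0 then M i j * a else 0)"
    using assms(2) by (intro sum.cong) auto
  also have "\<dots> = M i 0 * a"
    using assms(3) by simp
  finally show ?thesis .
qed

lemma pinner_tprod_collinear:
  assumes "finite N" "a \<in> N" "0 < q a"
    and inverse: "\<forall>i<q a. \<forall>k<q a. (\<Sum>j<q a. B i j * A a j k) = (if i = k then 1 else 0)"
    and rows: "\<forall>e\<in>N - {a}. \<forall>i<q e. A e 0 i = d e * m e i"
    and nonzero: "\<forall>e\<in>N - {a}. d e \<noteq> 0"
    and orth: "\<forall>j. 1 \<le> j \<longrightarrow> j < q a \<longrightarrow> tmap q N A F (\<lambda>e. if e = a then j else 0) = 0"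
    and y: "y \<in> asg q {a}"
  shows "pinner q (N - {a}) F (tprod (N - {a}) m) y =
    tmap q N A F (\<lambda>_. 0) / (\<Prod>e\<in>N - {a}. d e) * B (y a) 0"
proof -
  define S where "S = N - {a}"
  define D where "D = (\<Prod>e\<in>S. d e)"
  define P where "P k = pinner q S F (tprod S m) (\<lambda>e. if e = a then k else 0)" for k
  have N: "N = insert a S" using assms(2) by (auto simp: S_def)
  have "D \<noteq> 0" using nonzero assms(1) by (simp add: D_def S_def prod_zero_iff)
  have axis: "tmap q N A F (\<lambda>e. if e = a then j else 0) = D * (\<Sum>k<q a. A a j k * P k)" for j
    unfolding N D_def P_def
    by (rule tmap_at_axis) (use assms(1) rows in \<open>auto simp: S_def\<close>)
  have "tmap q N A F (\<lambda>_. 0) = D * (\<Sum>k<q a. A a 0 k * P k)"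
    using axis[of 0] by simp
  with axis orth \<open>D \<noteq> 0\<close>
  have "\<forall>j<q a. (\<Sum>k<q a. A a j k * P k) = (if j = 0 then tmap q N A F (\<lambda>_. 0) / D else 0)"
    by (auto simp: field_simps)
  moreover have "y a < q a" using y by (simp add: asg_def)
  ultimately have "P (y a) = B (y a) 0 * (tmap q N A F (\<lambda>_. 0) / D)"
    using inverse \<open>0 < q a\<close> by (intro left_inverse_solve[where N = "A a"])
  moreover have "pinner q S F (tprod S m) y = P (y a)"
    by (subst asg_singleton_eq[OF y]) (simp add: P_def)
  ultimately show ?thesis by (simp add: S_def D_def)
qed

lemma tinner_tprod_axis:
  assumes "finite S" "(\<lambda>e. if e = a then j else 0) \<in> asg q S"
  shows "tinner q S T (tprod S (\<lambda>e. if e = a then evec j else evec 0)) = T (\<lambda>e. if e = a then j else 0)"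
proof -
  have "(\<lambda>e. if e = a then evec j else evec 0) = (\<lambda>e. evec (if e = a then j else 0))"
    by auto
  then show ?thesis using tinner_tprod_evec[OF assms] by simp
qed

locale gauge_fixed_point =
  fixes V :: "'v set" and W :: "'w set" and E :: "('v \<times> 'w) set"
    and q :: "'v \<times> 'w \<Rightarrow> nat"
    and f :: "'v \<Rightarrow> ('v \<times> 'w) tensor" and g :: "'w \<Rightarrow> ('v \<times> 'w) tensor"
    and Phi Phih :: "'v \<times> 'w \<Rightarrow> nat \<Rightarrow> nat \<Rightarrow> real"
    and mvw mwv :: "'v \<times> 'w \<Rightarrow> nat \<Rightarrow> real"
    and c ch :: "'v \<times> 'w \<Rightarrow> real"
  assumes finite_V: "finite V" and finite_W: "finite W" and E_sub: "E \<subseteq> V \<times> W"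
    and q_pos: "\<forall>e\<in>E. 0 < q e"
    and inverse: "\<forall>e\<in>E. is_inverse (q e) (Phi e) (Phih e)"
    and orth_f: "\<forall>v w x. (v, w) \<in> E \<longrightarrow> 1 \<le> x \<longrightarrow> x < q (v, w) \<longrightarrow>
        tinner q (Ev E v) (fhat q E Phih f v)
          (tprod (Ev E v) (\<lambda>e. if e = (v, w) then evec x else evec 0)) = 0"
    and orth_g: "\<forall>v w x. (v, w) \<in> E \<longrightarrow> 1 \<le> x \<longrightarrow> x < q (v, w) \<longrightarrow>
        tinner q (Ew E w)
          (tprod (Ew E w) (\<lambda>e. if e = (v, w) then evec x else evec 0)) (ghat q E Phi g w) = 0"
    and Phi_column: "\<forall>e\<in>E. \<forall>i<q e. Phi e i 0 = c e * mvw e i"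
    and Phih_row: "\<forall>e\<in>E. \<forall>i<q e. Phih e 0 i = ch e * mwv e i"
    and c_pos: "\<forall>e\<in>E. c e > 0 \<and> ch e > 0"
begin

lemma finite_E: "finite E"
  using finite_subset[OF E_sub] finite_V finite_W by blast

lemma Ev_sub: "Ev E v \<subseteq> E" and Ew_sub: "Ew E w \<subseteq> E"
  by (auto simp: Ev_def Ew_def)

lemma finite_Ev: "finite (Ev E v)" and finite_Ew: "finite (Ew E w)"
  using finite_subset[OF Ev_sub finite_E] finite_subset[OF Ew_sub finite_E] .

lemma axis_in_asg: "N \<subseteq> E \<Longrightarrow> a \<in> N \<Longrightarrow> j < q a \<Longrightarrow> (\<lambda>e. if e = a then j else 0) \<in> asg q N"
  using q_pos by (auto simp: asg_def)

lemma zero_in_asg: "N \<subseteq> E \<Longrightarrow> (\<lambda>_. 0) \<in> asg q N"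
  using q_pos by (auto simp: asg_def)

lemma edge_normalization: "e \<in> E \<Longrightarrow> c e * ch e * einner (q e) (mvw e) (mwv e) = 1"
proof -
  assume e: "e \<in> E"
  have "c e * ch e * einner (q e) (mvw e) (mwv e) = (\<Sum>i<q e. Phih e 0 i * Phi e i 0)"
    using e Phi_column Phih_row by (simp add: einner_def sum_distrib_left mult_ac)
  also have "\<dots> = 1"
    using e inverse q_pos by (simp add: is_inverse_def)
  finally show ?thesis .
qed

lemma alpha_eq_fhat_zero: "alpha q E Phih f v = fhat q E Phih f v (\<lambda>_. 0)"
  unfolding alpha_def
  using tinner_tprod_evec[OF finite_Ev zero_in_asg[OF Ev_sub]] by simp

lemma alphah_eq_ghat_zero: "alphah q E Phi g w = ghat q E Phi g w (\<lambda>_. 0)"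
  unfolding alphah_def
  using tinner_tprod_evec[OF finite_Ew zero_in_asg[OF Ew_sub]] by (simp add: tinner_commute)

lemma alpha_eq_tinner: "alpha q E Phih f v = (\<Prod>e\<in>Ev E v. ch e) * tinner q (Ev E v) (f v) (tprod (Ev E v) mwv)"
  unfolding alpha_eq_fhat_zero fhat_def
  by (rule tmap_at_zero[OF finite_Ev]) (use Phih_row Ev_sub in blast)

lemma alphah_eq_tinner: "alphah q E Phi g w = (\<Prod>e\<in>Ew E w. c e) * tinner q (Ew E w) (tprod (Ew E w) mvw) (g w)"
  unfolding alphah_eq_ghat_zero ghat_def tinner_commute[of q "Ew E w" "tprod (Ew E w) mvw"]
  by (rule tmap_at_zero[OF finite_Ew]) (use Phi_column Ew_sub in \<open>auto simp: adj_def\<close>)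

lemma fhat_vanishes_on_axis:
  assumes "(v, w) \<in> E" "1 \<le> j" "j < q (v, w)"
  shows "fhat q E Phih f v (\<lambda>e. if e = (v, w) then j else 0) = 0"
proof -
  have "(v, w) \<in> Ev E v" using assms(1) by (simp add: Ev_def)
  then have "fhat q E Phih f v (\<lambda>e. if e = (v, w) then j else 0) =
      tinner q (Ev E v) (fhat q E Phih f v) (tprod (Ev E v) (\<lambda>e. if e = (v, w) then evec j else evec 0))"
    by (rule tinner_tprod_axis[OF finite_Ev axis_in_asg[OF Ev_sub _ assms(3)], symmetric])
  also have "\<dots> = 0" using orth_f assms by blast
  finally show ?thesis .
qed

lemma ghat_vanishes_on_axis:
  assumes "(v, w) \<in> E" "1 \<le> j" "j < q (v, w)"
  shows "ghat q E Phi g w (\<lambda>e. if e = (v, w) then j else 0) = 0"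
proof -
  have "(v, w) \<in> Ew E w" using assms(1) by (simp add: Ew_def)
  then have "ghat q E Phi g w (\<lambda>e. if e = (v, w) then j else 0) =
      tinner q (Ew E w) (tprod (Ew E w) (\<lambda>e. if e = (v, w) then evec j else evec 0)) (ghat q E Phi g w)"
    unfolding tinner_commute[of q _ "tprod _ _"]
    by (rule tinner_tprod_axis[OF finite_Ew axis_in_asg[OF Ew_sub _ assms(3)], symmetric])
  also have "\<dots> = 0" using orth_g assms by blast
  finally show ?thesis .
qed

lemma message_from_variable:
  assumes e: "(v, w) \<in> E" and y: "y \<in> asg q {(v, w)}"
  shows "pinner q (Ev E v - {(v, w)}) (f v) (tprod (Ev E v - {(v, w)}) mwv) y =
    alpha q E Phih f v * c (v, w) / (\<Prod>e\<in>Ev E v - {(v, w)}. ch e) * mvw (v, w) (y (v, w))"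
proof -
  have a: "(v, w) \<in> Ev E v" using e by (simp add: Ev_def)
  have "y (v, w) < q (v, w)" using y by (simp add: asg_def)
  then have "Phi (v, w) (y (v, w)) 0 = c (v, w) * mvw (v, w) (y (v, w))"
    using Phi_column e by blast
  moreover have "pinner q (Ev E v - {(v, w)}) (f v) (tprod (Ev E v - {(v, w)}) mwv) y =
      tmap q (Ev E v) Phih (f v) (\<lambda>_. 0) / (\<Prod>e\<in>Ev E v - {(v, w)}. ch e) * Phi (v, w) (y (v, w)) 0"
  proof (rule pinner_tprod_collinear[where d = ch, OF finite_Ev a _ _ _ _ _ y])
    show "0 < q (v, w)" using q_pos e by blast
    show "\<forall>i<q (v, w). \<forall>k<q (v, w).
        (\<Sum>j<q (v, w). Phi (v, w) i j * Phih (v, w) j k) = (if i = k then 1 else 0)"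
      using inverse e by (simp add: is_inverse_def)
    show "\<forall>e\<in>Ev E v - {(v, w)}. \<forall>i<q e. Phih e 0 i = ch e * mwv e i"
      using Phih_row Ev_sub by blast
    show "\<forall>e\<in>Ev E v - {(v, w)}. ch e \<noteq> 0"
      using c_pos Ev_sub by fastforce
    show "\<forall>j. 1 \<le> j \<longrightarrow> j < q (v, w) \<longrightarrow>
        tmap q (Ev E v) Phih (f v) (\<lambda>e. if e = (v, w) then j else 0) = 0"
      using fhat_vanishes_on_axis[OF e] by (simp add: fhat_def)
  qed
  ultimately show ?thesis
    by (simp add: alpha_eq_fhat_zero fhat_def)
qed

lemma message_from_factor:
  assumes e: "(v, w) \<in> E" and y: "y \<in> asg q {(v, w)}"
  shows "lpinner q (Ew E w - {(v, w)}) (tprod (Ew E w - {(v, w)}) mvw) (g w) y =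
    alphah q E Phi g w * ch (v, w) / (\<Prod>e\<in>Ew E w - {(v, w)}. c e) * mwv (v, w) (y (v, w))"
proof -
  have a: "(v, w) \<in> Ew E w" using e by (simp add: Ew_def)
  have "y (v, w) < q (v, w)" using y by (simp add: asg_def)
  then have "adj (Phih (v, w)) (y (v, w)) 0 = ch (v, w) * mwv (v, w) (y (v, w))"
    using Phih_row e by (simp add: adj_def)
  moreover have "pinner q (Ew E w - {(v, w)}) (g w) (tprod (Ew E w - {(v, w)}) mvw) y =
      tmap q (Ew E w) (\<lambda>e. adj (Phi e)) (g w) (\<lambda>_. 0) / (\<Prod>e\<in>Ew E w - {(v, w)}. c e) *
      adj (Phih (v, w)) (y (v, w)) 0"
  proof (rule pinner_tprod_collinear[where d = c and A = "\<lambda>e. adj (Phi e)", OF finite_Ew a _ _ _ _ _ y])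
    show "0 < q (v, w)" using q_pos e by blast
    show "\<forall>i<q (v, w). \<forall>k<q (v, w).
        (\<Sum>j<q (v, w). adj (Phih (v, w)) i j * adj (Phi (v, w)) j k) = (if i = k then 1 else 0)"
      using inverse e by (auto simp: is_inverse_def adj_def mult.commute)
    show "\<forall>e\<in>Ew E w - {(v, w)}. \<forall>i<q e. adj (Phi e) 0 i = c e * mvw e i"
      using Phi_column Ew_sub by (auto simp: adj_def)
    show "\<forall>e\<in>Ew E w - {(v, w)}. c e \<noteq> 0"
      using c_pos Ew_sub by fastforce
    show "\<forall>j. 1 \<le> j \<longrightarrow> j < q (v, w) \<longrightarrow>
        tmap q (Ew E w) (\<lambda>e. adj (Phi e)) (g w) (\<lambda>e. if e = (v, w) then j else 0) = 0"
      using ghat_vanishes_on_axis[OF e] by (simp add: ghat_def)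
  qed
  ultimately show ?thesis
    by (simp add: lpinner_eq_pinner alphah_eq_ghat_zero ghat_def)
qed

lemma prod_Ev_Ew:
  "(\<Prod>v\<in>V. \<Prod>e\<in>Ev E v. h e) = (\<Prod>e\<in>E. h e)"
  "(\<Prod>w\<in>W. \<Prod>e\<in>Ew E w. h e) = (\<Prod>e\<in>E. h e)"
proof -
  have "fst ` E \<subseteq> V" "snd ` E \<subseteq> W" using E_sub by auto
  then show "(\<Prod>v\<in>V. \<Prod>e\<in>Ev E v. h e) = (\<Prod>e\<in>E. h e)" "(\<Prod>w\<in>W. \<Prod>e\<in>Ew E w. h e) = (\<Prod>e\<in>E. h e)"
    using prod.group[OF finite_E finite_V, of fst h] prod.group[OF finite_E finite_W, of snd h]
    by (simp_all add: Ev_def Ew_def)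
qed

lemma zero_term_factorization:
  "(\<Prod>v\<in>V. alpha q E Phih f v) * (\<Prod>w\<in>W. alphah q E Phi g w) =
    (\<Prod>v\<in>V. tinner q (Ev E v) (f v) (tprod (Ev E v) mwv)) *
    (\<Prod>w\<in>W. tinner q (Ew E w) (tprod (Ew E w) mvw) (g w)) *
    (\<Prod>e\<in>E. 1 / einner (q e) (mvw e) (mwv e))"
proof -
  have "1 / einner (q e) (mvw e) (mwv e) = ch e * c e" if "e \<in> E" for e
  proof -
    have "einner (q e) (mvw e) (mwv e) \<noteq> 0" using edge_normalization[OF that] by auto
    with edge_normalization[OF that] show ?thesis by (simp add: field_simps)
  qed
  then have "(\<Prod>e\<in>E. 1 / einner (q e) (mvw e) (mwv e)) = (\<Prod>e\<in>E. ch e * c e)"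
    by (rule prod.cong[OF refl])
  then show ?thesis
    unfolding alpha_eq_tinner alphah_eq_tinner prod.distrib prod_Ev_Ew by (simp add: mult_ac)
qed

lemma bp_fixed_point_if_alpha_pos:
  assumes "\<forall>e\<in>E. mvw e \<in> C e \<and> mwv e \<in> dual_cone (q e) (C e)"
    and "\<forall>e\<in>E. einner (q e) (mvw e) (us e) = 1 \<and> einner (q e) (u e) (mwv e) = 1"
    and alpha_pos: "\<forall>v\<in>V. alpha q E Phih f v > 0" and alphah_pos: "\<forall>w\<in>W. alphah q E Phi g w > 0"
  shows "bp_fixed_point q E C u us f g mvw mwv"
  unfolding bp_fixed_point_def
proof (intro conjI allI impI)
  fix v w assume e: "(v, w) \<in> E"
  let ?D = "\<Prod>e\<in>Ev E v - {(v, w)}. ch e" and ?Dh = "\<Prod>e\<in>Ew E w - {(v, w)}. c e"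
  have pos: "?D > 0" "?Dh > 0" "alpha q E Phih f v > 0" "alphah q E Phi g w > 0"
      "c (v, w) > 0" "ch (v, w) > 0"
    using c_pos Ev_sub Ew_sub alpha_pos alphah_pos e E_sub by (auto intro!: prod_pos dest!: subsetD)
  show "\<exists>k>0. \<forall>y\<in>asg q {(v, w)}. mvw (v, w) (y (v, w)) =
      k * pinner q (Ev E v - {(v, w)}) (f v) (tprod (Ev E v - {(v, w)}) mwv) y"
    using pos by (auto simp: message_from_variable[OF e]
        intro!: exI[of _ "?D / (alpha q E Phih f v * c (v, w))"])
  show "\<exists>k>0. \<forall>y\<in>asg q {(v, w)}. mwv (v, w) (y (v, w)) =
      k * lpinner q (Ew E w - {(v, w)}) (tprod (Ew E w - {(v, w)}) mvw) (g w) y"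
    using pos by (auto simp: message_from_factor[OF e]
        intro!: exI[of _ "?Dh / (alphah q E Phi g w * ch (v, w))"])
qed (use assms(1,2) in blast)+

end

lemma mapp_evec_zero: "i < n \<Longrightarrow> mapp n A (evec 0) i = A i 0"
  by (simp add: mapp_def evec_def if_distrib cong: if_cong)

theorem mainTheorem4:
  fixes V :: "'v set" and W :: "'w set" and E :: "('v \<times> 'w) set"
    and q :: "'v \<times> 'w \<Rightarrow> nat"
    and f :: "'v \<Rightarrow> ('v \<times> 'w) tensor" and g :: "'w \<Rightarrow> ('v \<times> 'w) tensor"
    and Phi Phih :: "'v \<times> 'w \<Rightarrow> nat \<Rightarrow> nat \<Rightarrow> real"
    and C :: "'v \<times> 'w \<Rightarrow> (nat \<Rightarrow> real) set"
    and u us :: "'v \<times> 'w \<Rightarrow> nat \<Rightarrow> real"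
    and mvw mwv :: "'v \<times> 'w \<Rightarrow> nat \<Rightarrow> real"
    and c ch :: "'v \<times> 'w \<Rightarrow> real"
  assumes graph: "finite V" "finite W" "E \<subseteq> V \<times> W"
    and dim: "\<forall>e\<in>E. q e \<ge> 1"
    and inv: "\<forall>e\<in>E. is_inverse (q e) (Phi e) (Phih e)"
    and orth_f: "\<forall>v w x. (v, w) \<in> E \<longrightarrow> 1 \<le> x \<longrightarrow> x < q (v, w) \<longrightarrow>
        tinner q (Ev E v) (fhat q E Phih f v)
          (tprod (Ev E v) (\<lambda>e. if e = (v, w) then evec x else evec 0)) = 0"
    and orth_g: "\<forall>v w x. (v, w) \<in> E \<longrightarrow> 1 \<le> x \<longrightarrow> x < q (v, w) \<longrightarrow>
        tinner q (Ew E w)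
          (tprod (Ew E w) (\<lambda>e. if e = (v, w) then evec x else evec 0)) (ghat q E Phi g w) = 0"
    and cones: "\<forall>e\<in>E. closed_convex_cone (q e) (C e)"
    and u_int: "\<forall>e\<in>E. in_einterior (q e) (C e) (u e)"
    and us_int: "\<forall>e\<in>E. in_einterior (q e) (dual_cone (q e) (C e)) (us e)"
    and Phi_C: "\<forall>e\<in>E. mapp (q e) (Phi e) (evec 0) \<in> C e"
    and Phih_C: "\<forall>e\<in>E. mapp (q e) (adj (Phih e)) (evec 0) \<in> dual_cone (q e) (C e)"
    and Phi_pos: "\<forall>e\<in>E. einner (q e) (mapp (q e) (Phi e) (evec 0)) (us e) > 0"
    and Phih_pos: "\<forall>e\<in>E. einner (q e) (u e) (mapp (q e) (adj (Phih e)) (evec 0)) > 0"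
    and decomp: "\<forall>e\<in>E. mapp (q e) (Phi e) (evec 0) = (\<lambda>i. c e * mvw e i)"
    and decomph: "\<forall>e\<in>E. mapp (q e) (adj (Phih e)) (evec 0) = (\<lambda>i. ch e * mwv e i)"
    and c_pos: "\<forall>e\<in>E. c e > 0 \<and> ch e > 0"
    and m_C: "\<forall>e\<in>E. mvw e \<in> C e \<and> mwv e \<in> dual_cone (q e) (C e)"
    and m_norm: "\<forall>e\<in>E. einner (q e) (mvw e) (us e) = 1 \<and> einner (q e) (u e) (mwv e) = 1"
  shows
    "(\<forall>e\<in>E. c e * ch e * einner (q e) (mvw e) (mwv e) = 1)
     \<and> (\<forall>v w. (v, w) \<in> E \<longrightarrow> (\<forall>y\<in>asg q {(v, w)}.
          pinner q (Ev E v - {(v, w)}) (f v) (tprod (Ev E v - {(v, w)}) mwv) y =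
            alpha q E Phih f v * c (v, w) / (\<Prod>e\<in>Ev E v - {(v, w)}. ch e) * mvw (v, w) (y (v, w))))
     \<and> (\<forall>v w. (v, w) \<in> E \<longrightarrow> (\<forall>y\<in>asg q {(v, w)}.
          lpinner q (Ew E w - {(v, w)}) (tprod (Ew E w - {(v, w)}) mvw) (g w) y =
            alphah q E Phi g w * ch (v, w) / (\<Prod>e\<in>Ew E w - {(v, w)}. c e) * mwv (v, w) (y (v, w))))
     \<and> ((\<forall>v\<in>V. alpha q E Phih f v > 0) \<and> (\<forall>w\<in>W. alphah q E Phi g w > 0) \<longrightarrow>
          bp_fixed_point q E C u us f g mvw mwv)
     \<and> (\<Prod>v\<in>V. alpha q E Phih f v) * (\<Prod>w\<in>W. alphah q E Phi g w) =
        (\<Prod>v\<in>V. tinner q (Ev E v) (f v) (tprod (Ev E v) mwv)) *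
        (\<Prod>w\<in>W. tinner q (Ew E w) (tprod (Ew E w) mvw) (g w)) *
        (\<Prod>e\<in>E. 1 / einner (q e) (mvw e) (mwv e))"
  \<comment> \<open>The cone and positivity hypotheses serve only to make decomp and decomph possible.\<close>
proof -
  have "\<forall>e\<in>E. \<forall>i<q e. Phi e i 0 = c e * mvw e i"
    using decomp by (metis mapp_evec_zero)
  moreover have "\<forall>e\<in>E. \<forall>i<q e. Phih e 0 i = ch e * mwv e i"
    using decomph by (metis mapp_evec_zero adj_def)
  ultimately interpret gauge_fixed_point V W E q f g Phi Phih mvw mwv c ch
    using graph dim inv orth_f orth_g c_pos by unfold_locales auto
  show ?thesis
    using edge_normalization message_from_variable message_from_factor
      bp_fixed_point_if_alpha_pos[OF m_C m_norm] zero_term_factorization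
    by blast
qed

end
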